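(* Let $n\ge2$ and $N\ge1$, and let $R=\begin{pmatrix}M_0&0\\0&M_0\end{pmatrix}$, where $M_0$ is the $n\times n$ matrix with $1$'s on the anti-diagonal and $0$'s elsewhere. Then a complete set of representatives of the double cosets $\Gamma_0^n(N)\backslash\mathrm{Sp}_n(\mathbb Q)/P_{n,n-1}(\mathbb Q)$ can be chosen from the set $P_{n,n-1}(\mathbb Q)R$.
   Context: $\Gamma_0^n(N)=\{\begin{pmatrix}A&B\\C&D\end{pmatrix}\in\mathrm{Sp}_n(\mathbb Z): C\equiv0\bmod N\}$. For $1\le r\le n-1$ and a subring $R'\subset\mathbb R$, $P_{n,r}(R')$ is the parabolic subgroup of $\mathrm{Sp}_n(R')$ consisting of the matrices of the block form $\begin{pmatrix}a_{11}&0&b_{11}&b_{12}\\ a_{21}&a_{22}&b_{21}&b_{22}\\ c_{11}&0&d_{11}&d_{12}\\ 0&0&0&d_{22}\end{pmatrix}$, where blocks with index $11$ are $r\times r$ and blocks with index $22$ are $(n-r)\times(n-r)$. *)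

theory Defs
  imports "Jordan_Normal_Form.Matrix"
begin

text \<open>Matrices are 2n x 2n rational matrices, rows/columns indexed 0..2n-1;
  block (1,1) = rows/cols 0..n-1, block (2,2) = rows/cols n..2n-1.\<close>

definition J_mat :: "nat \<Rightarrow> rat mat" where
  "J_mat n = four_block_mat (0\<^sub>m n n) (1\<^sub>m n) (- 1\<^sub>m n) (0\<^sub>m n n)"

definition Sp_Q :: "nat \<Rightarrow> rat mat set" where
  "Sp_Q n = {M \<in> carrier_mat (2*n) (2*n). transpose_mat M * J_mat n * M = J_mat n}"

definition Gamma0 :: "nat \<Rightarrow> nat \<Rightarrow> rat mat set" where
  "Gamma0 n N = {M \<in> Sp_Q n.
      (\<forall>i<2*n. \<forall>j<2*n. M $$ (i,j) \<in> \<int>) \<and>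
      (\<forall>i<n. \<forall>j<n. \<exists>k::int. M $$ (n+i, j) = of_int (int N * k))}"

text \<open>Parabolic P_{n,r}(Q): symplectic with the block zero pattern
  [[a11,0,b11,b12],[a21,a22,b21,b22],[c11,0,d11,d12],[0,0,0,d22]].\<close>
definition P_Q :: "nat \<Rightarrow> nat \<Rightarrow> rat mat set" where
  "P_Q n r = {M \<in> Sp_Q n.
      \<forall>i<2*n. \<forall>j<2*n.
        (((i < r \<or> (n \<le> i \<and> i < n + r)) \<and> r \<le> j \<and> j < n) \<or>
         (n + r \<le> i \<and> j < n + r)) \<longrightarrow> M $$ (i,j) = 0}"

definition antidiag_mat :: "nat \<Rightarrow> rat mat" where
  "antidiag_mat n = mat n n (\<lambda>(i,j). if i + j = n - 1 then 1 else 0)"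

definition R_mat :: "nat \<Rightarrow> rat mat" where
  "R_mat n = four_block_mat (antidiag_mat n) (0\<^sub>m n n) (0\<^sub>m n n) (antidiag_mat n)"

definition double_coset :: "nat \<Rightarrow> nat \<Rightarrow> nat \<Rightarrow> rat mat \<Rightarrow> rat mat set" where
  "double_coset n N r g = {\<gamma> * g * p | \<gamma> p. \<gamma> \<in> Gamma0 n N \<and> p \<in> P_Q n r}"

end

theory Submission
  imports Defs "Jordan_Normal_Form.Determinant"
begin

text \<open>
  \<open>P\<^sub>n\<^sub>,\<^sub>n\<^sub>-\<^sub>1(\<rat>)\<close> is the stabiliser in \<open>Sp\<^sub>n(\<rat>)\<close> of the line \<open>\<rat> e\<^sub>n\<close>, so the double coset
  \<open>\<Gamma> g P\<close> only depends on the \<open>\<Gamma>\<^sub>0\<^sup>n(N)\<close>-orbit of the vector \<open>g e\<^sub>n\<close>. The elements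
  \<open>(1 0; N 1)\<close> and \<open>diag(A, D)\<close> of \<open>\<Gamma>\<^sub>0\<^sup>n(N)\<close>, with \<open>D \<in> GL\<^sub>n(\<int>)\<close> a Bezout matrix acting on the
  coordinates \<open>1\<close> and \<open>n\<close>, move every nonzero vector to some \<open>(x, y)\<close> with \<open>y \<noteq> 0\<close> and \<open>y\<^sub>n = 0\<close>,
  and every such vector lies in the orbit \<open>P e\<^sub>1\<close>. If \<open>\<gamma> g e\<^sub>n = p e\<^sub>1\<close>, then \<open>g \<in> \<Gamma> (p R) P\<close> because \<open>R\<close> swaps
  \<open>e\<^sub>1\<close> and \<open>e\<^sub>n\<close>.
\<close>

lemma square_mult_carrier [simp]:
  "A \<in> carrier_mat m m \<Longrightarrow> B \<in> carrier_mat m m \<Longrightarrow> A * B \<in> carrier_mat m m"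
  by (rule mult_carrier_mat)

lemma four_block_square_carrier:
  "A \<in> carrier_mat n n \<Longrightarrow> B \<in> carrier_mat n n \<Longrightarrow> C \<in> carrier_mat n n \<Longrightarrow> D \<in> carrier_mat n n
    \<Longrightarrow> four_block_mat A B C D \<in> carrier_mat (2*n) (2*n)"
  by (metis four_block_carrier_mat mult_2)

lemma matrix_entry_as_sum:
  assumes "M \<in> carrier_mat m m" "K \<in> carrier_mat m m" "i < m" "j < m"
  shows "(M * K) $$ (i,j) = (\<Sum>k<m. M $$ (i,k) * K $$ (k,j))"
  using assms by (simp add: scalar_prod_def lessThan_atLeast0)

lemma smult_one_mat_mult_vec: "x \<in> carrier_vec n \<Longrightarrow> ((c :: 'a :: comm_ring_1) \<cdot>\<^sub>m 1\<^sub>m n) *\<^sub>v x = c \<cdot>\<^sub>v x"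
  by (intro eq_vecI) (auto simp: scalar_prod_smult_left)

section \<open>The symplectic group\<close>

lemma J_mat_carrier [simp]: "J_mat n \<in> carrier_mat (2*n) (2*n)"
  unfolding J_mat_def by (intro four_block_square_carrier) auto

lemma J_mat_dim [simp]: "dim_row (J_mat n) = 2*n" "dim_col (J_mat n) = 2*n"
  using J_mat_carrier[of n] unfolding carrier_mat_def by auto

lemma J_mat_squared: "J_mat n * J_mat n = - 1\<^sub>m (2*n)"
proof -
  have "J_mat n * J_mat n = four_block_mat (- 1\<^sub>m n) (0\<^sub>m n n) (0\<^sub>m n n) (- 1\<^sub>m n)"
    unfolding J_mat_def by (subst mult_four_block_mat[of _ n n _ n _ n _ _ n _ n]) auto
  also have "\<dots> = - 1\<^sub>m (2*n)"
    by (rule eq_matI) auto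
  finally show ?thesis .
qed

lemma row_J_mat:
  "i < 2*n \<Longrightarrow> row (J_mat n) i = (if i < n then unit_vec (2*n) (i+n) else - unit_vec (2*n) (i-n))"
  unfolding J_mat_def by (intro eq_vecI) auto

lemma col_J_mat:
  "j < 2*n \<Longrightarrow> col (J_mat n) j = (if j < n then - unit_vec (2*n) (j+n) else unit_vec (2*n) (j-n))"
  unfolding J_mat_def by (intro eq_vecI) auto

lemma J_mat_mult_index:
  assumes "X \<in> carrier_mat (2*n) (2*n)" "i < 2*n" "j < 2*n"
  shows "(J_mat n * X) $$ (i,j) = (if i < n then X $$ (i+n, j) else - X $$ (i-n, j))"
  using assms by (auto simp: row_J_mat)

lemma mult_J_mat_index:
  assumes "X \<in> carrier_mat (2*n) (2*n)" "i < 2*n" "j < 2*n"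
  shows "(X * J_mat n) $$ (i,j) = (if j < n then - X $$ (i, j+n) else X $$ (i, j-n))"
  using assms by (auto simp: col_J_mat)

lemma transpose_four_block_J_four_block:
  assumes "A \<in> carrier_mat n n" "B \<in> carrier_mat n n" "C \<in> carrier_mat n n" "D \<in> carrier_mat n n"
  shows "transpose_mat (four_block_mat A B C D) * J_mat n * four_block_mat A B C D =
     four_block_mat (transpose_mat A * C - transpose_mat C * A) (transpose_mat A * D - transpose_mat C * B)
                    (transpose_mat B * C - transpose_mat D * A) (transpose_mat B * D - transpose_mat D * B)"
proof -
  have "transpose_mat (four_block_mat A B C D) * J_mat n
      = four_block_mat (- transpose_mat C) (transpose_mat A) (- transpose_mat D) (transpose_mat B)"
    unfolding transpose_four_block_mat[OF assms] J_mat_def using assms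
    by (subst mult_four_block_mat[of _ n n _ n _ n _ _ n _ n]) auto
  then show ?thesis using assms
    by (simp, subst mult_four_block_mat[of _ n n _ n _ n _ _ n _ n]) (auto simp: minus_add_uminus_mat)
qed

lemma Sp_Q_carrier: "M \<in> Sp_Q n \<Longrightarrow> M \<in> carrier_mat (2*n) (2*n)"
  unfolding Sp_Q_def by auto

lemma Sp_Q_one: "1\<^sub>m (2*n) \<in> Sp_Q n"
  unfolding Sp_Q_def by (simp add: left_mult_one_mat[OF J_mat_carrier] right_mult_one_mat[OF J_mat_carrier])

lemma Sp_Q_mult:
  assumes "M \<in> Sp_Q n" "K \<in> Sp_Q n"
  shows "M * K \<in> Sp_Q n"
proof -
  have M: "M \<in> carrier_mat (2*n) (2*n)" and K: "K \<in> carrier_mat (2*n) (2*n)"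
    using assms Sp_Q_carrier by auto
  have "transpose_mat (M * K) * J_mat n * (M * K) = transpose_mat K * (transpose_mat M * J_mat n * M) * K"
    using M K by (simp add: transpose_mult[OF M K] assoc_mult_mat[of _ "2*n" "2*n" _ "2*n" _ "2*n"])
  also have "\<dots> = J_mat n"
    using assms K unfolding Sp_Q_def
    by (simp add: assoc_mult_mat[of _ "2*n" "2*n" _ "2*n" _ "2*n"])
  finally show ?thesis
    using M K unfolding Sp_Q_def by auto
qed

lemma four_block_Sp_Q:
  assumes "A \<in> carrier_mat n n" "B \<in> carrier_mat n n" "C \<in> carrier_mat n n" "D \<in> carrier_mat n n"
    and "transpose_mat A * C = transpose_mat C * A" "transpose_mat B * D = transpose_mat D * B"
    and "transpose_mat A * D - transpose_mat C * B = 1\<^sub>m n"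
  shows "four_block_mat A B C D \<in> Sp_Q n"
proof -
  have "transpose_mat D * A - transpose_mat B * C = 1\<^sub>m n"
  proof -
    have "transpose_mat (transpose_mat A * D - transpose_mat C * B)
        = transpose_mat (transpose_mat A * D) - transpose_mat (transpose_mat C * B)"
      using assms(1-4) by (intro transpose_minus[of _ n n]) auto
    also have "\<dots> = transpose_mat D * A - transpose_mat B * C"
      using assms(1-4) by (simp add: transpose_mult[of _ n n _ n])
    finally show ?thesis
      using assms(7) by simp
  qed
  moreover have "transpose_mat B * C - transpose_mat D * A = - (transpose_mat D * A - transpose_mat B * C)"
    using assms(1-4) by (intro eq_matI) auto
  ultimately have "transpose_mat B * C - transpose_mat D * A = - 1\<^sub>m n"
    by simp
  moreover have "transpose_mat A * C - transpose_mat C * A = 0\<^sub>m n n"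
    "transpose_mat B * D - transpose_mat D * B = 0\<^sub>m n n"
    unfolding assms(5,6) using assms(1-4) by (auto intro!: minus_r_inv_mat)
  ultimately have "transpose_mat (four_block_mat A B C D) * J_mat n * four_block_mat A B C D = J_mat n"
    unfolding transpose_four_block_J_four_block[OF assms(1-4)] assms(7) by (simp add: J_mat_def)
  then show ?thesis
    unfolding Sp_Q_def using four_block_square_carrier assms(1-4) by blast
qed

text \<open>From \<open>M\<^sup>T J M = J\<close> and \<open>J\<^sup>-\<^sup>1 = -J\<close>, the inverse of a symplectic matrix is \<open>-J M\<^sup>T J\<close>.\<close>

definition sp_inv :: "nat \<Rightarrow> rat mat \<Rightarrow> rat mat" where
  "sp_inv n M = - (J_mat n * (transpose_mat M * J_mat n))"

lemma sp_inv_carrier: "M \<in> carrier_mat (2*n) (2*n) \<Longrightarrow> sp_inv n M \<in> carrier_mat (2*n) (2*n)"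
  unfolding sp_inv_def by simp

lemma sp_inv_left:
  assumes "M \<in> Sp_Q n"
  shows "sp_inv n M * M = 1\<^sub>m (2*n)"
proof -
  have M: "M \<in> carrier_mat (2*n) (2*n)" using assms Sp_Q_carrier by auto
  have "sp_inv n M * M = - (J_mat n * (transpose_mat M * J_mat n * M))"
    unfolding sp_inv_def using M
    by (simp add: uminus_mult_left_mat assoc_mult_mat[of _ "2*n" "2*n" _ "2*n" _ "2*n"])
  also have "\<dots> = 1\<^sub>m (2*n)"
    using assms unfolding Sp_Q_def by (simp add: J_mat_squared)
  finally show ?thesis .
qed

lemma sp_inv_right:
  assumes "M \<in> Sp_Q n"
  shows "M * sp_inv n M = 1\<^sub>m (2*n)"
  using mat_mult_left_right_inverse[OF sp_inv_carrier[OF Sp_Q_carrier] Sp_Q_carrier sp_inv_left] assms by blast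

lemma sp_inv_Sp_Q:
  assumes "M \<in> Sp_Q n"
  shows "sp_inv n M \<in> Sp_Q n"
proof -
  have M: "M \<in> carrier_mat (2*n) (2*n)" using assms Sp_Q_carrier by auto
  have S: "sp_inv n M \<in> carrier_mat (2*n) (2*n)" using sp_inv_carrier[OF M] .
  have "transpose_mat (sp_inv n M) * J_mat n * sp_inv n M
      = transpose_mat (sp_inv n M) * (transpose_mat M * J_mat n * M) * sp_inv n M"
    using assms unfolding Sp_Q_def by simp
  also have "\<dots> = transpose_mat (M * sp_inv n M) * J_mat n * (M * sp_inv n M)"
    using M S by (simp add: transpose_mult[OF M S] assoc_mult_mat[of _ "2*n" "2*n" _ "2*n" _ "2*n"])
  also have "\<dots> = J_mat n"
    unfolding sp_inv_right[OF assms]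
    by (simp add: left_mult_one_mat[OF J_mat_carrier] right_mult_one_mat[OF J_mat_carrier])
  finally show ?thesis
    using S unfolding Sp_Q_def by auto
qed

lemma sp_inv_index:
  assumes M: "M \<in> carrier_mat (2*n) (2*n)" and i: "i < 2*n" and j: "j < 2*n"
  shows "sp_inv n M $$ (i,j) =
    (if i < n then (if j < n then M $$ (j+n, i+n) else - M $$ (j-n, i+n))
     else (if j < n then - M $$ (j+n, i-n) else M $$ (j-n, i-n)))"
proof -
  have MtJ: "transpose_mat M * J_mat n \<in> carrier_mat (2*n) (2*n)" using M by simp
  have "sp_inv n M $$ (i,j) = - ((J_mat n * (transpose_mat M * J_mat n)) $$ (i,j))"
    unfolding sp_inv_def using i j MtJ by (subst index_uminus_mat) (auto simp del: index_mult_mat(1))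
  also have "\<dots> = - (if i < n then (transpose_mat M * J_mat n) $$ (i+n, j)
                      else - (transpose_mat M * J_mat n) $$ (i-n, j))"
    by (subst J_mat_mult_index[OF MtJ i j]) (rule refl)
  finally show ?thesis
    using i j M by (simp add: mult_J_mat_index del: index_mult_mat(1))
qed

lemma Sp_Q_mult_vec_nonzero:
  assumes M: "M \<in> Sp_Q n" and v: "v \<in> carrier_vec (2*n)" "v \<noteq> 0\<^sub>v (2*n)"
  shows "M *\<^sub>v v \<noteq> 0\<^sub>v (2*n)"
proof
  assume Mv: "M *\<^sub>v v = 0\<^sub>v (2*n)"
  have "v = (sp_inv n M * M) *\<^sub>v v"
    unfolding sp_inv_left[OF M] using v by simp
  also have "\<dots> = sp_inv n M *\<^sub>v 0\<^sub>v (2*n)"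
    using Sp_Q_carrier[OF M] sp_inv_carrier v Mv by (simp add: assoc_mult_mat_vec[of _ "2*n" "2*n" _ "2*n"])
  also have "\<dots> = 0\<^sub>v (2*n)"
    using sp_inv_carrier[OF Sp_Q_carrier[OF M]] by (intro eq_vecI) auto
  finally show False using v by simp
qed

section \<open>The congruence subgroup\<close>

definition int_multiples :: "nat \<Rightarrow> rat set" where
  "int_multiples N = {of_int (int N * k) | k. True}"

lemma int_multiples_zero [simp]: "0 \<in> int_multiples N"
  unfolding int_multiples_def by (auto intro: exI[of _ 0])

lemma int_multiples_uminus: "x \<in> int_multiples N \<Longrightarrow> - x \<in> int_multiples N"
proof -
  assume "x \<in> int_multiples N"
  then obtain k where "x = of_int (int N * k)" unfolding int_multiples_def by blast
  then have "- x = of_int (int N * (- k))" by simp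
  then show ?thesis unfolding int_multiples_def by blast
qed

lemma int_multiples_add: "x \<in> int_multiples N \<Longrightarrow> y \<in> int_multiples N \<Longrightarrow> x + y \<in> int_multiples N"
proof -
  assume "x \<in> int_multiples N" "y \<in> int_multiples N"
  then obtain k l where "x = of_int (int N * k)" "y = of_int (int N * l)"
    unfolding int_multiples_def by blast
  then have "x + y = of_int (int N * (k + l))" by (simp add: distrib_left)
  then show ?thesis unfolding int_multiples_def by blast
qed

lemma int_multiples_sum:
  "(\<And>k. k \<in> A \<Longrightarrow> f k \<in> int_multiples N) \<Longrightarrow> sum f A \<in> int_multiples N"
  by (induction A rule: infinite_finite_induct) (auto intro: int_multiples_add)

lemma int_multiples_mult_Ints:
  assumes "x \<in> int_multiples N" "y \<in> \<int>"
  shows "x * y \<in> int_multiples N" "y * x \<in> int_multiples N"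
proof -
  obtain k where "x = of_int (int N * k)"
    using assms(1) unfolding int_multiples_def by blast
  moreover obtain l where "y = of_int l"
    using assms(2) by (rule Ints_cases)
  ultimately have "x * y = of_int (int N * (k * l))" "y * x = of_int (int N * (k * l))"
    by (simp_all add: algebra_simps)
  then show "x * y \<in> int_multiples N" "y * x \<in> int_multiples N"
    unfolding int_multiples_def by blast+
qed

lemma Gamma0_iff:
  "M \<in> Gamma0 n N \<longleftrightarrow> M \<in> Sp_Q n \<and> (\<forall>i<2*n. \<forall>j<2*n. M $$ (i,j) \<in> \<int>) \<and>
      (\<forall>i<n. \<forall>j<n. M $$ (n+i, j) \<in> int_multiples N)"
  unfolding Gamma0_def int_multiples_def by simp

lemma Gamma0_Sp_Q: "M \<in> Gamma0 n N \<Longrightarrow> M \<in> Sp_Q n"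
  unfolding Gamma0_iff by simp

lemma Gamma0_carrier: "M \<in> Gamma0 n N \<Longrightarrow> M \<in> carrier_mat (2*n) (2*n)"
  using Gamma0_Sp_Q Sp_Q_carrier by blast

lemma Gamma0_one: "1\<^sub>m (2*n) \<in> Gamma0 n N"
  unfolding Gamma0_iff using Sp_Q_one by auto

lemma Gamma0_mult:
  assumes M: "M \<in> Gamma0 n N" and K: "K \<in> Gamma0 n N"
  shows "M * K \<in> Gamma0 n N"
proof -
  have Mc: "M \<in> carrier_mat (2*n) (2*n)" and Kc: "K \<in> carrier_mat (2*n) (2*n)"
    using M K Gamma0_carrier by auto
  have Mi: "\<And>i j. i < 2*n \<Longrightarrow> j < 2*n \<Longrightarrow> M $$ (i,j) \<in> \<int>"
   and Ki: "\<And>i j. i < 2*n \<Longrightarrow> j < 2*n \<Longrightarrow> K $$ (i,j) \<in> \<int>"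
   and Md: "\<And>i j. i < n \<Longrightarrow> j < n \<Longrightarrow> M $$ (n+i,j) \<in> int_multiples N"
   and Kd: "\<And>i j. i < n \<Longrightarrow> j < n \<Longrightarrow> K $$ (n+i,j) \<in> int_multiples N"
    using M K unfolding Gamma0_iff by auto
  have "(M * K) $$ (i,j) \<in> \<int>" if "i < 2*n" "j < 2*n" for i j
    using that Mi Ki by (auto simp: matrix_entry_as_sum[OF Mc Kc] intro!: Ints_sum Ints_mult)
  moreover have "(M * K) $$ (n+i, j) \<in> int_multiples N" if i: "i < n" and j: "j < n" for i j
  proof -
    have "M $$ (n+i, k) * K $$ (k, j) \<in> int_multiples N" if k: "k < 2*n" for k
    proof (cases "k < n")
      case True
      then show ?thesis using Md[OF i True] Ki[of k j] j by (auto intro: int_multiples_mult_Ints)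
    next
      case False
      then have "K $$ (k,j) = K $$ (n + (k-n), j)" by simp
      then show ?thesis using Kd[of "k-n" j] Mi[of "n+i" k] k j i False
        by (auto intro: int_multiples_mult_Ints)
    qed
    then show ?thesis
      using i j by (auto simp: matrix_entry_as_sum[OF Mc Kc] intro!: int_multiples_sum)
  qed
  ultimately show ?thesis
    unfolding Gamma0_iff using Sp_Q_mult M K Gamma0_Sp_Q by blast
qed

lemma Gamma0_sp_inv:
  assumes M: "M \<in> Gamma0 n N"
  shows "sp_inv n M \<in> Gamma0 n N"
proof -
  have Mc: "M \<in> carrier_mat (2*n) (2*n)" using M Gamma0_carrier by auto
  have Mi: "\<And>i j. i < 2*n \<Longrightarrow> j < 2*n \<Longrightarrow> M $$ (i,j) \<in> \<int>"
   and Md: "\<And>i j. i < n \<Longrightarrow> j < n \<Longrightarrow> M $$ (n+i,j) \<in> int_multiples N"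
    using M unfolding Gamma0_iff by auto
  have "sp_inv n M $$ (i,j) \<in> \<int>" if "i < 2*n" "j < 2*n" for i j
    using that Mi by (auto simp: sp_inv_index[OF Mc])
  moreover have "sp_inv n M $$ (n+i, j) \<in> int_multiples N" if "i < n" "j < n" for i j
    using that Md[of j i] by (simp add: sp_inv_index[OF Mc] add.commute int_multiples_uminus)
  ultimately show ?thesis
    unfolding Gamma0_iff using sp_inv_Sp_Q M Gamma0_Sp_Q by blast
qed

section \<open>The parabolic subgroup as a line stabiliser\<close>

definition e_1 :: "nat \<Rightarrow> rat vec" where
  "e_1 n = unit_vec (2*n) 0"

definition e_n :: "nat \<Rightarrow> rat vec" where
  "e_n n = unit_vec (2*n) (n-1)"

lemma e_1_carrier [simp]: "e_1 n \<in> carrier_vec (2*n)"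
  unfolding e_1_def by simp

lemma e_n_carrier [simp]: "e_n n \<in> carrier_vec (2*n)"
  unfolding e_n_def by simp

lemma e_1_append: "n \<ge> 1 \<Longrightarrow> e_1 n = unit_vec n 0 @\<^sub>v 0\<^sub>v n"
  unfolding e_1_def by (rule eq_vecI) auto

lemma e_n_append: "n \<ge> 1 \<Longrightarrow> e_n n = unit_vec n (n-1) @\<^sub>v 0\<^sub>v n"
  unfolding e_n_def by (rule eq_vecI) auto

lemma mult_e_n_index:
  "M \<in> carrier_mat (2*n) (2*n) \<Longrightarrow> n \<ge> 1 \<Longrightarrow> i < 2*n \<Longrightarrow> (M *\<^sub>v e_n n) $ i = M $$ (i, n-1)"
  unfolding e_n_def by simp

lemma J_mat_mult_e_n: "n \<ge> 1 \<Longrightarrow> J_mat n *\<^sub>v e_n n = - unit_vec (2*n) (2*n-1)"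
  unfolding e_n_def by (intro eq_vecI) (auto simp: row_J_mat)

lemma P_Q_iff_zero_pattern:
  assumes "n \<ge> 1"
  shows "M \<in> P_Q n (n-1) \<longleftrightarrow> M \<in> Sp_Q n \<and>
    (\<forall>i<2*n. \<forall>j<2*n. (j = n-1 \<and> i \<noteq> n-1) \<or> (i = 2*n-1 \<and> j \<noteq> 2*n-1) \<longrightarrow> M $$ (i,j) = 0)"
proof -
  have "(((i < n-1 \<or> (n \<le> i \<and> i < n + (n-1))) \<and> n-1 \<le> j \<and> j < n) \<or> (n + (n-1) \<le> i \<and> j < n + (n-1)))
      \<longleftrightarrow> (j = n-1 \<and> i \<noteq> n-1) \<or> (i = 2*n-1 \<and> j \<noteq> 2*n-1)"
    if "i < 2*n" "j < 2*n" for i j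
    using that assms by auto
  then show ?thesis
    unfolding P_Q_def by auto
qed

lemma Sp_Q_last_row_of_fixed_line:
  assumes n: "n \<ge> 1" and M: "M \<in> Sp_Q n" and Me: "M *\<^sub>v e_n n = c \<cdot>\<^sub>v e_n n" and j: "j < 2*n"
  shows "c * M $$ (2*n-1, j) = (if j = 2*n-1 then 1 else 0)"
proof -
  have Mc: "M \<in> carrier_mat (2*n) (2*n)" using M Sp_Q_carrier by auto
  have "transpose_mat M *\<^sub>v (J_mat n *\<^sub>v (M *\<^sub>v e_n n)) = (transpose_mat M * J_mat n * M) *\<^sub>v e_n n"
    using Mc by (simp add: assoc_mult_mat_vec[of _ "2*n" "2*n" _ "2*n"])
  also have "\<dots> = J_mat n *\<^sub>v e_n n"
    using M unfolding Sp_Q_def by simp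
  finally have "transpose_mat M *\<^sub>v (c \<cdot>\<^sub>v (- unit_vec (2*n) (2*n-1))) = - unit_vec (2*n) (2*n-1)"
    unfolding Me mult_mat_vec[OF J_mat_carrier e_n_carrier] J_mat_mult_e_n[OF n] .
  then have "(transpose_mat M *\<^sub>v (c \<cdot>\<^sub>v (- unit_vec (2*n) (2*n-1)))) $ j = (- unit_vec (2*n) (2*n-1)) $ j"
    by simp
  then show ?thesis
    using j Mc n by (auto simp: scalar_prod_smult_right)
qed

lemma P_Q_iff_fixes_line:
  assumes n: "n \<ge> 1"
  shows "M \<in> P_Q n (n-1) \<longleftrightarrow> M \<in> Sp_Q n \<and> (\<exists>c. M *\<^sub>v e_n n = c \<cdot>\<^sub>v e_n n)"
proof
  assume M: "M \<in> P_Q n (n-1)"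
  then have MS: "M \<in> Sp_Q n"
    and zero: "\<And>i j. i < 2*n \<Longrightarrow> j < 2*n \<Longrightarrow> j = n-1 \<and> i \<noteq> n-1 \<Longrightarrow> M $$ (i,j) = 0"
    unfolding P_Q_iff_zero_pattern[OF n] by auto
  have col: "M $$ (i, n-1) = 0" if "i < 2*n" "i \<noteq> n-1" for i
    using zero[OF that(1), of "n-1"] that n by simp
  have "M *\<^sub>v e_n n = M $$ (n-1,n-1) \<cdot>\<^sub>v e_n n"
    using Sp_Q_carrier[OF MS] n col by (intro eq_vecI) (auto simp: mult_e_n_index, auto simp: e_n_def)
  then show "M \<in> Sp_Q n \<and> (\<exists>c. M *\<^sub>v e_n n = c \<cdot>\<^sub>v e_n n)"
    using MS by blast
next
  assume "M \<in> Sp_Q n \<and> (\<exists>c. M *\<^sub>v e_n n = c \<cdot>\<^sub>v e_n n)"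
  then obtain c where MS: "M \<in> Sp_Q n" and Me: "M *\<^sub>v e_n n = c \<cdot>\<^sub>v e_n n" by auto
  have Mc: "M \<in> carrier_mat (2*n) (2*n)" using MS Sp_Q_carrier by auto
  have row: "c * M $$ (2*n-1, j) = (if j = 2*n-1 then 1 else 0)" if "j < 2*n" for j
    using Sp_Q_last_row_of_fixed_line[OF n MS Me that] .
  have "c * M $$ (2*n-1, 2*n-1) = 1" using row[of "2*n-1"] n by simp
  then have "c \<noteq> 0" by auto
  then have "M $$ (2*n-1, j) = 0" if "j < 2*n" "j \<noteq> 2*n-1" for j
    using row[OF that(1)] that(2) by simp
  moreover have "M $$ (i, n-1) = (if i = n-1 then c else 0)" if "i < 2*n" for i
    using arg_cong[OF Me, of "\<lambda>v. v $ i"] that n Mc by (simp add: mult_e_n_index e_n_def)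
  ultimately show "M \<in> P_Q n (n-1)"
    unfolding P_Q_iff_zero_pattern[OF n] using MS by auto
qed

lemma P_Q_Sp_Q: "n \<ge> 1 \<Longrightarrow> M \<in> P_Q n (n-1) \<Longrightarrow> M \<in> Sp_Q n"
  using P_Q_iff_fixes_line by blast

lemma P_Q_carrier: "n \<ge> 1 \<Longrightarrow> M \<in> P_Q n (n-1) \<Longrightarrow> M \<in> carrier_mat (2*n) (2*n)"
  using P_Q_Sp_Q Sp_Q_carrier by blast

lemma P_Q_one: "n \<ge> 1 \<Longrightarrow> 1\<^sub>m (2*n) \<in> P_Q n (n-1)"
  unfolding P_Q_iff_fixes_line using Sp_Q_one by (auto intro!: exI[of _ 1])

lemma P_Q_mult:
  assumes n: "n \<ge> 1" and M: "M \<in> P_Q n (n-1)" and K: "K \<in> P_Q n (n-1)"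
  shows "M * K \<in> P_Q n (n-1)"
proof -
  obtain a b where MS: "M \<in> Sp_Q n" and Ma: "M *\<^sub>v e_n n = a \<cdot>\<^sub>v e_n n"
    and KS: "K \<in> Sp_Q n" and Kb: "K *\<^sub>v e_n n = b \<cdot>\<^sub>v e_n n"
    using M K P_Q_iff_fixes_line[OF n] by auto
  have Mc: "M \<in> carrier_mat (2*n) (2*n)" and Kc: "K \<in> carrier_mat (2*n) (2*n)"
    using MS KS Sp_Q_carrier by auto
  have "(M * K) *\<^sub>v e_n n = M *\<^sub>v (K *\<^sub>v e_n n)"
    using Mc Kc by simp
  also have "\<dots> = (b * a) \<cdot>\<^sub>v e_n n"
    unfolding Kb mult_mat_vec[OF Mc e_n_carrier] Ma by (rule smult_smult_assoc)
  finally show ?thesis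
    unfolding P_Q_iff_fixes_line[OF n] using Sp_Q_mult[OF MS KS] by blast
qed

lemma P_Q_sp_inv:
  assumes n: "n \<ge> 1" and M: "M \<in> P_Q n (n-1)"
  shows "sp_inv n M \<in> P_Q n (n-1)"
proof -
  obtain a where MS: "M \<in> Sp_Q n" and Ma: "M *\<^sub>v e_n n = a \<cdot>\<^sub>v e_n n"
    using M P_Q_iff_fixes_line[OF n] by auto
  have Mc: "M \<in> carrier_mat (2*n) (2*n)" using MS Sp_Q_carrier by auto
  have Sc: "sp_inv n M \<in> carrier_mat (2*n) (2*n)" using sp_inv_carrier[OF Mc] .
  have "e_n n = (sp_inv n M * M) *\<^sub>v e_n n"
    unfolding sp_inv_left[OF MS] by simp
  also have "\<dots> = a \<cdot>\<^sub>v (sp_inv n M *\<^sub>v e_n n)"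
    using Mc Sc by (simp add: Ma mult_mat_vec[OF Sc e_n_carrier])
  finally have e: "e_n n = a \<cdot>\<^sub>v (sp_inv n M *\<^sub>v e_n n)" .
  have "a \<noteq> 0"
    using arg_cong[OF e, of "\<lambda>v. v $ (n-1)"] n Sc by (auto simp: e_n_def)
  then have "sp_inv n M *\<^sub>v e_n n = (1/a) \<cdot>\<^sub>v e_n n"
    by (subst e) (simp add: smult_smult_assoc)
  then show ?thesis
    unfolding P_Q_iff_fixes_line[OF n] using sp_inv_Sp_Q[OF MS] by blast
qed

section \<open>Double cosets\<close>

lemma double_coset_self:
  assumes "n \<ge> 1" "g \<in> carrier_mat (2*n) (2*n)"
  shows "g \<in> double_coset n N (n-1) g"
proof -
  have "g = 1\<^sub>m (2*n) * g * 1\<^sub>m (2*n)" using assms(2) by simp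
  then show ?thesis
    unfolding double_coset_def using Gamma0_one P_Q_one[OF assms(1)] by blast
qed

lemma double_coset_subset:
  assumes n: "n \<ge> 1" and s: "s \<in> carrier_mat (2*n) (2*n)"
    and \<gamma>: "\<gamma> \<in> Gamma0 n N" and p: "p \<in> P_Q n (n-1)"
  shows "double_coset n N (n-1) (\<gamma> * s * p) \<subseteq> double_coset n N (n-1) s"
proof
  fix h assume "h \<in> double_coset n N (n-1) (\<gamma> * s * p)"
  then obtain \<gamma>' p' where h: "h = \<gamma>' * (\<gamma> * s * p) * p'"
    and \<gamma>': "\<gamma>' \<in> Gamma0 n N" and p': "p' \<in> P_Q n (n-1)"
    unfolding double_coset_def by auto
  have "h = (\<gamma>' * \<gamma>) * s * (p * p')"
    unfolding h using s Gamma0_carrier[OF \<gamma>] Gamma0_carrier[OF \<gamma>'] P_Q_carrier[OF n p] P_Q_carrier[OF n p']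
    by (simp add: assoc_mult_mat[of _ "2*n" "2*n" _ "2*n" _ "2*n"])
  then show "h \<in> double_coset n N (n-1) s"
    unfolding double_coset_def using Gamma0_mult[OF \<gamma>' \<gamma>] P_Q_mult[OF n p p'] by blast
qed

lemma double_coset_eq:
  assumes n: "n \<ge> 1" and s: "s \<in> carrier_mat (2*n) (2*n)" and g: "g \<in> double_coset n N (n-1) s"
  shows "double_coset n N (n-1) g = double_coset n N (n-1) s"
proof -
  obtain \<gamma> p where g: "g = \<gamma> * s * p" and \<gamma>: "\<gamma> \<in> Gamma0 n N" and p: "p \<in> P_Q n (n-1)"
    using g unfolding double_coset_def by auto
  have \<gamma>c: "\<gamma> \<in> carrier_mat (2*n) (2*n)" and pc: "p \<in> carrier_mat (2*n) (2*n)"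
    using Gamma0_carrier[OF \<gamma>] P_Q_carrier[OF n p] .
  have "sp_inv n \<gamma> * g * sp_inv n p = (sp_inv n \<gamma> * \<gamma>) * s * (p * sp_inv n p)"
    unfolding g using s \<gamma>c pc sp_inv_carrier[OF \<gamma>c] sp_inv_carrier[OF pc]
    by (simp add: assoc_mult_mat[of _ "2*n" "2*n" _ "2*n" _ "2*n"])
  also have "\<dots> = s"
    unfolding sp_inv_left[OF Gamma0_Sp_Q[OF \<gamma>]] sp_inv_right[OF P_Q_Sp_Q[OF n p]] using s by simp
  finally have s_eq: "sp_inv n \<gamma> * g * sp_inv n p = s" .
  have gc: "g \<in> carrier_mat (2*n) (2*n)"
    unfolding g using s \<gamma>c pc by simp
  show ?thesis
  proof
    show "double_coset n N (n-1) g \<subseteq> double_coset n N (n-1) s"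
      unfolding g using double_coset_subset[OF n s \<gamma> p] .
    show "double_coset n N (n-1) s \<subseteq> double_coset n N (n-1) g"
      using double_coset_subset[OF n gc Gamma0_sp_inv[OF \<gamma>] P_Q_sp_inv[OF n p]] by (simp only: s_eq)
  qed
qed

lemma exists_class_representatives:
  fixes cl :: "'a \<Rightarrow> 'a set"
  assumes refl: "\<And>g. g \<in> X \<Longrightarrow> g \<in> cl g"
    and meets: "\<And>g. g \<in> X \<Longrightarrow> \<exists>t\<in>T. g \<in> cl t"
    and eq: "\<And>g t. g \<in> X \<Longrightarrow> t \<in> T \<Longrightarrow> g \<in> cl t \<Longrightarrow> cl g = cl t"
  shows "\<exists>S. S \<subseteq> T \<and> (\<forall>g\<in>X. \<exists>!s. s \<in> S \<and> g \<in> cl s)"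
proof -
  define rep where "rep g = (SOME t. t \<in> T \<and> cl t = cl g)" for g
  have rep: "rep g \<in> T \<and> cl (rep g) = cl g" if g: "g \<in> X" for g
  proof -
    obtain t where t: "t \<in> T" "g \<in> cl t" using meets[OF g] by blast
    then have "t \<in> T \<and> cl t = cl g" using eq[OF g t] by simp
    then show ?thesis unfolding rep_def by (rule someI)
  qed
  show ?thesis
  proof (intro exI[of _ "rep ` X"] conjI ballI)
    show "rep ` X \<subseteq> T"
      using rep by auto
  next
    fix g assume g: "g \<in> X"
    show "\<exists>!s. s \<in> rep ` X \<and> g \<in> cl s"
    proof (rule ex1I[of _ "rep g"])
      show "rep g \<in> rep ` X \<and> g \<in> cl (rep g)"
        using g rep[OF g] refl[OF g] by simp
    next
      fix s assume s: "s \<in> rep ` X \<and> g \<in> cl s"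
      then obtain h where h: "h \<in> X" and sh: "s = rep h" by blast
      have sT: "s \<in> T" using rep[OF h] sh by simp
      have "cl g = cl s" using eq[OF g sT] s by simp
      also have "\<dots> = cl h" using rep[OF h] sh by simp
      finally have "rep g = rep h" unfolding rep_def by simp
      then show "s = rep g" using sh by simp
    qed
  qed
qed

lemma antidiag_mat_dim [simp]: "dim_row (antidiag_mat n) = n" "dim_col (antidiag_mat n) = n"
  unfolding antidiag_mat_def by simp_all

lemma transpose_antidiag_mat: "transpose_mat (antidiag_mat n) = antidiag_mat n"
  unfolding antidiag_mat_def by (rule eq_matI) auto

lemma antidiag_mat_squared: "antidiag_mat n * antidiag_mat n = 1\<^sub>m n"
proof (rule eq_matI)
  fix i j assume "i < dim_row (1\<^sub>m n :: rat mat)" "j < dim_col (1\<^sub>m n :: rat mat)"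
  then have i: "i < n" and j: "j < n" by auto
  have "(antidiag_mat n * antidiag_mat n) $$ (i,j) = (\<Sum>k<n. antidiag_mat n $$ (i,k) * antidiag_mat n $$ (k,j))"
    using i j by (intro matrix_entry_as_sum) auto
  also have "\<dots> = (\<Sum>k<n. if k = n-1-i then (if i = j then 1 else 0) else 0)"
    using i j unfolding antidiag_mat_def by (intro sum.cong) auto
  also have "\<dots> = 1\<^sub>m n $$ (i,j)"
    using i j by simp
  finally show "(antidiag_mat n * antidiag_mat n) $$ (i,j) = 1\<^sub>m n $$ (i,j)" .
qed (auto simp: antidiag_mat_def)

lemma R_mat_carrier: "R_mat n \<in> carrier_mat (2*n) (2*n)"
  unfolding R_mat_def by (rule four_block_square_carrier) auto

lemma R_mat_Sp_Q: "R_mat n \<in> Sp_Q n"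
  unfolding R_mat_def
  by (rule four_block_Sp_Q)
     (auto simp: transpose_antidiag_mat antidiag_mat_squared left_mult_zero_mat' right_mult_zero_mat')

lemma R_mat_squared: "R_mat n * R_mat n = 1\<^sub>m (2*n)"
  unfolding R_mat_def
  by (subst mult_four_block_mat[of _ n n _ n _ n _ _ n _ n])
     (auto simp: antidiag_mat_squared mult_2 left_mult_zero_mat' right_mult_zero_mat')

lemma R_mat_mult_e_1: "n \<ge> 1 \<Longrightarrow> R_mat n *\<^sub>v e_1 n = e_n n"
  unfolding e_n_def e_1_def
  by (rule eq_vecI) (auto simp: R_mat_def antidiag_mat_def)

definition sp_diag :: "nat \<Rightarrow> rat mat \<Rightarrow> rat mat \<Rightarrow> rat mat" where
  "sp_diag n A D = four_block_mat A (0\<^sub>m n n) (0\<^sub>m n n) D"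

definition sp_upper :: "nat \<Rightarrow> rat mat \<Rightarrow> rat mat" where
  "sp_upper n B = four_block_mat (1\<^sub>m n) B (0\<^sub>m n n) (1\<^sub>m n)"

definition sp_lower :: "nat \<Rightarrow> rat mat \<Rightarrow> rat mat" where
  "sp_lower n C = four_block_mat (1\<^sub>m n) (0\<^sub>m n n) C (1\<^sub>m n)"

lemma sp_diag_Sp_Q:
  assumes A: "A \<in> carrier_mat n n" and D: "D \<in> carrier_mat n n" and AD: "transpose_mat A * D = 1\<^sub>m n"
  shows "sp_diag n A D \<in> Sp_Q n"
proof -
  have "transpose_mat D * A = 1\<^sub>m n"
    using arg_cong[OF AD, of transpose_mat] transpose_mult[of "transpose_mat A" n n D n] A D by simp
  then show ?thesis
    unfolding sp_diag_def using A D AD by (intro four_block_Sp_Q) auto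
qed

lemma sp_upper_Sp_Q:
  assumes "B \<in> carrier_mat n n" "transpose_mat B = B"
  shows "sp_upper n B \<in> Sp_Q n"
  unfolding sp_upper_def using assms by (intro four_block_Sp_Q) auto

lemma sp_lower_Sp_Q:
  assumes "C \<in> carrier_mat n n" "transpose_mat C = C"
  shows "sp_lower n C \<in> Sp_Q n"
  unfolding sp_lower_def using assms by (intro four_block_Sp_Q) auto

lemma sp_diag_mult_vec:
  "A \<in> carrier_mat n n \<Longrightarrow> D \<in> carrier_mat n n \<Longrightarrow> x \<in> carrier_vec n \<Longrightarrow> y \<in> carrier_vec n
    \<Longrightarrow> sp_diag n A D *\<^sub>v (x @\<^sub>v y) = (A *\<^sub>v x) @\<^sub>v (D *\<^sub>v y)"
  unfolding sp_diag_def by (subst four_block_mat_mult_vec[of _ n n _ n _ n]) auto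

lemma sp_upper_mult_vec:
  "B \<in> carrier_mat n n \<Longrightarrow> x \<in> carrier_vec n \<Longrightarrow> y \<in> carrier_vec n
    \<Longrightarrow> sp_upper n B *\<^sub>v (x @\<^sub>v y) = (x + B *\<^sub>v y) @\<^sub>v y"
  unfolding sp_upper_def by (subst four_block_mat_mult_vec[of _ n n _ n _ n]) auto

lemma sp_lower_mult_vec:
  "C \<in> carrier_mat n n \<Longrightarrow> x \<in> carrier_vec n \<Longrightarrow> y \<in> carrier_vec n
    \<Longrightarrow> sp_lower n C *\<^sub>v (x @\<^sub>v y) = x @\<^sub>v (C *\<^sub>v x + y)"
  unfolding sp_lower_def by (subst four_block_mat_mult_vec[of _ n n _ n _ n]) auto

lemma sp_upper_P_Q:
  assumes n: "n \<ge> 1" and B: "B \<in> carrier_mat n n" "transpose_mat B = B"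
  shows "sp_upper n B \<in> P_Q n (n-1)"
  unfolding P_Q_iff_fixes_line[OF n] using sp_upper_Sp_Q[OF B] sp_upper_mult_vec[OF B(1)] n B
  by (auto simp: e_n_append intro!: exI[of _ 1])

lemma sp_lower_P_Q:
  assumes n: "n \<ge> 1" and C: "C \<in> carrier_mat n n" "transpose_mat C = C"
    and "C *\<^sub>v unit_vec n (n-1) = 0\<^sub>v n"
  shows "sp_lower n C \<in> P_Q n (n-1)"
  unfolding P_Q_iff_fixes_line[OF n] using sp_lower_Sp_Q[OF C] sp_lower_mult_vec[OF C(1)] n assms(4)
  by (auto simp: e_n_append intro!: exI[of _ 1])

lemma sp_diag_Gamma0:
  assumes A: "A \<in> carrier_mat n n" and D: "D \<in> carrier_mat n n" and AD: "transpose_mat A * D = 1\<^sub>m n"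
    and "\<And>i j. i < n \<Longrightarrow> j < n \<Longrightarrow> A $$ (i,j) \<in> \<int>"
    and "\<And>i j. i < n \<Longrightarrow> j < n \<Longrightarrow> D $$ (i,j) \<in> \<int>"
  shows "sp_diag n A D \<in> Gamma0 n N"
  unfolding Gamma0_iff using sp_diag_Sp_Q[OF A D AD] assms by (auto simp: sp_diag_def)

lemma sp_lower_Gamma0:
  assumes C: "C \<in> carrier_mat n n" "transpose_mat C = C"
    and "\<And>i j. i < n \<Longrightarrow> j < n \<Longrightarrow> C $$ (i,j) \<in> int_multiples N"
  shows "sp_lower n C \<in> Gamma0 n N"
proof -
  have "C $$ (i,j) \<in> \<int>" if "i < n" "j < n" for i j
    using assms(3)[OF that] unfolding int_multiples_def by auto
  then show ?thesis
    unfolding Gamma0_iff using sp_lower_Sp_Q[OF C] assms by (auto simp: sp_lower_def)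
qed

text \<open>The identity with the block \<open>(a b; c d)\<close> in rows and columns \<open>1\<close> and \<open>n\<close>; the four
  entries only occupy distinct positions when \<open>n \<ge> 2\<close>.\<close>

definition corner_mat :: "nat \<Rightarrow> rat \<Rightarrow> rat \<Rightarrow> rat \<Rightarrow> rat \<Rightarrow> rat mat" where
  "corner_mat n a b c d = mat n n (\<lambda>(i,j).
     if i = 0 \<and> j = 0 then a else if i = 0 \<and> j = n-1 then b
     else if i = n-1 \<and> j = 0 then c else if i = n-1 \<and> j = n-1 then d
     else if i = j then 1 else 0)"

lemma corner_mat_carrier [simp]: "corner_mat n a b c d \<in> carrier_mat n n"
  unfolding corner_mat_def by simp

lemma corner_mat_dim [simp]: "dim_row (corner_mat n a b c d) = n" "dim_col (corner_mat n a b c d) = n"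
  unfolding corner_mat_def by simp_all

lemma corner_mat_row_sum:
  assumes n: "n \<ge> 2" and i: "i < n"
  shows "(\<Sum>k<n. corner_mat n a b c d $$ (i,k) * f k) =
    (if i = 0 then a * f 0 + b * f (n-1) else if i = n-1 then c * f 0 + d * f (n-1) else f i)"
proof -
  let ?E = "corner_mat n a b c d"
  have "(\<Sum>k<n. ?E $$ (i,k) * f k) = (\<Sum>k<n. (if k = 0 then ?E $$ (i,0) * f 0 else 0)
      + (if k = n-1 then ?E $$ (i,n-1) * f (n-1) else 0) + (if k = i \<and> i \<noteq> 0 \<and> i \<noteq> n-1 then f i else 0))"
    using n i by (intro sum.cong) (auto simp: corner_mat_def)
  also have "\<dots> = ?E $$ (i,0) * f 0 + ?E $$ (i,n-1) * f (n-1) + (if i \<noteq> 0 \<and> i \<noteq> n-1 then f i else 0)"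
    using n i by (simp add: sum.distrib)
  also have "\<dots> = (if i = 0 then a * f 0 + b * f (n-1) else if i = n-1 then c * f 0 + d * f (n-1) else f i)"
    using n i by (auto simp: corner_mat_def)
  finally show ?thesis .
qed

lemma transpose_corner_mat: "n \<ge> 2 \<Longrightarrow> transpose_mat (corner_mat n a b c d) = corner_mat n a c b d"
  unfolding corner_mat_def by (rule eq_matI) auto

lemma corner_mat_one: "n \<ge> 2 \<Longrightarrow> corner_mat n 1 0 0 1 = 1\<^sub>m n"
  unfolding corner_mat_def by (rule eq_matI) auto

lemma corner_mat_mult:
  assumes n: "n \<ge> 2"
  shows "corner_mat n a b c d * corner_mat n a' b' c' d' =
    corner_mat n (a*a' + b*c') (a*b' + b*d') (c*a' + d*c') (c*b' + d*d')"
proof (rule eq_matI)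
  fix i j assume "i < dim_row (corner_mat n (a*a' + b*c') (a*b' + b*d') (c*a' + d*c') (c*b' + d*d'))"
    and "j < dim_col (corner_mat n (a*a' + b*c') (a*b' + b*d') (c*a' + d*c') (c*b' + d*d'))"
  then have i: "i < n" and j: "j < n" by auto
  show "(corner_mat n a b c d * corner_mat n a' b' c' d') $$ (i,j) =
      corner_mat n (a*a' + b*c') (a*b' + b*d') (c*a' + d*c') (c*b' + d*d') $$ (i,j)"
    using n i j
    by (simp add: matrix_entry_as_sum[of _ n] corner_mat_row_sum del: index_mult_mat(1))
       (auto simp: corner_mat_def)
qed auto

lemma corner_mat_mult_vec_last:
  assumes n: "n \<ge> 2" and y: "y \<in> carrier_vec n"
  shows "(corner_mat n a b c d *\<^sub>v y) $ (n-1) = c * y $ 0 + d * y $ (n-1)"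
proof -
  have "(corner_mat n a b c d *\<^sub>v y) $ (n-1) = (\<Sum>k<n. corner_mat n a b c d $$ (n-1,k) * y $ k)"
    using n y by (auto simp: scalar_prod_def lessThan_atLeast0 intro!: sum.cong)
  then show ?thesis
    using corner_mat_row_sum[OF n, of "n-1"] n by simp
qed

lemma corner_mat_Ints:
  "a \<in> \<int> \<Longrightarrow> b \<in> \<int> \<Longrightarrow> c \<in> \<int> \<Longrightarrow> d \<in> \<int> \<Longrightarrow> i < n \<Longrightarrow> j < n \<Longrightarrow> corner_mat n a b c d $$ (i,j) \<in> \<int>"
  unfolding corner_mat_def by auto

section \<open>Every double coset meets P R\<close>

text \<open>For \<open>y\<^sub>k \<noteq> 0\<close> take \<open>B = (z e\<^sub>k\<^sup>T + e\<^sub>k z\<^sup>T)/y\<^sub>k - (z\<cdot>y/y\<^sub>k\<^sup>2) e\<^sub>k e\<^sub>k\<^sup>T\<close>.\<close>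

lemma exists_symmetric_mat_mult_vec:
  fixes y z :: "rat vec"
  assumes y: "y \<in> carrier_vec n" "y \<noteq> 0\<^sub>v n" and z: "z \<in> carrier_vec n"
  shows "\<exists>B \<in> carrier_mat n n. transpose_mat B = B \<and> B *\<^sub>v y = z"
proof -
  obtain k where k: "k < n" and yk: "y $ k \<noteq> 0"
    using y by (metis eq_vecI index_zero_vec carrier_vecD)
  define B where "B = mat n n (\<lambda>(i,j). ((if j = k then z $ i else 0) + (if i = k then z $ j else 0)) / y $ k
      - (if i = k \<and> j = k then (z \<bullet> y) / (y $ k)^2 else 0))"
  have "B *\<^sub>v y = z"
  proof (rule eq_vecI)
    fix i assume "i < dim_vec z"
    then have i: "i < n" using z by simp
    have "(B *\<^sub>v y) $ i = (\<Sum>j<n. B $$ (i,j) * y $ j)"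
      using i y unfolding B_def by (auto simp: scalar_prod_def lessThan_atLeast0 intro!: sum.cong)
    also have "\<dots> = (\<Sum>j<n. (if j = k then z $ i else 0) + (if i = k then z $ j * y $ j / y $ k else 0)
        - (if i = k \<and> j = k then (z \<bullet> y) / y $ k else 0))"
      using i k yk unfolding B_def by (intro sum.cong) (auto simp: field_simps power2_eq_square)
    also have "\<dots> = z $ i + (if i = k then (\<Sum>j<n. z $ j * y $ j) / y $ k else 0)
        - (if i = k then (z \<bullet> y) / y $ k else 0)"
      using k by (simp add: sum.distrib sum_subtractf sum_divide_distrib)
    also have "(\<Sum>j<n. z $ j * y $ j) = z \<bullet> y"
      using y by (simp add: scalar_prod_def lessThan_atLeast0)
    finally show "(B *\<^sub>v y) $ i = z $ i" by simp
  qed (use z in \<open>simp add: B_def\<close>)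
  moreover have "transpose_mat B = B"
    unfolding B_def by (rule eq_matI) auto
  ultimately show ?thesis
    unfolding B_def by auto
qed

lemma P_Q_orbit_e_1:
  assumes n: "n \<ge> 2" and x: "x \<in> carrier_vec n" and y: "y \<in> carrier_vec n" "y \<noteq> 0\<^sub>v n"
    and y_last: "y $ (n-1) = 0"
  shows "\<exists>p \<in> P_Q n (n-1). p *\<^sub>v e_1 n = x @\<^sub>v y"
proof -
  define C where "C = mat n n (\<lambda>(i,j). if j = 0 then y $ i else if i = 0 then y $ j else 0)"
  have C: "C \<in> carrier_mat n n" "transpose_mat C = C"
    unfolding C_def by (auto intro!: eq_matI)
  have C_e_n: "C *\<^sub>v unit_vec n (n-1) = 0\<^sub>v n"
    using n y_last by (intro eq_vecI) (auto simp: C_def)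
  have C_e_1: "C *\<^sub>v unit_vec n 0 = y"
    using n y by (intro eq_vecI) (auto simp: C_def)
  obtain B where B: "B \<in> carrier_mat n n" "transpose_mat B = B" and By: "B *\<^sub>v y = x - unit_vec n 0"
    using exists_symmetric_mat_mult_vec[OF y, of "x - unit_vec n 0"] x by auto
  have n1: "n \<ge> 1" using n by simp
  have "(sp_upper n B * sp_lower n C) *\<^sub>v e_1 n = sp_upper n B *\<^sub>v (sp_lower n C *\<^sub>v e_1 n)"
    using Sp_Q_carrier[OF sp_upper_Sp_Q[OF B]] Sp_Q_carrier[OF sp_lower_Sp_Q[OF C]] by simp
  also have "sp_lower n C *\<^sub>v e_1 n = unit_vec n 0 @\<^sub>v y"
    unfolding e_1_append[OF n1] using sp_lower_mult_vec[OF C(1)] C_e_1 y n by simp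
  also have "sp_upper n B *\<^sub>v (unit_vec n 0 @\<^sub>v y) = (unit_vec n 0 + (x - unit_vec n 0)) @\<^sub>v y"
    using sp_upper_mult_vec[OF B(1), of "unit_vec n 0" y] y By by simp
  also have "unit_vec n 0 + (x - unit_vec n 0) = x"
    using x by (intro eq_vecI) auto
  finally show ?thesis
    using P_Q_mult[OF n1 sp_upper_P_Q[OF n1 B] sp_lower_P_Q[OF n1 C C_e_n]] by blast
qed

lemma rat_pair_as_coprime_multiple:
  fixes u v :: rat
  obtains a b :: int and r :: rat where "coprime a b" "u = of_int a * r" "v = of_int b * r"
proof -
  obtain p q :: int and d :: int where d: "d > 0" and u: "u = of_int p / of_int d" and v: "v = of_int q / of_int d"
  proof -
    obtain p0 q0 where 0: "quotient_of u = (p0,q0)" by fastforce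
    obtain p1 q1 where 1: "quotient_of v = (p1,q1)" by fastforce
    have "q0 > 0" "q1 > 0" using quotient_of_denom_pos[OF 0] quotient_of_denom_pos[OF 1] .
    then show ?thesis
      using that[of "q0*q1" "p0*q1" "p1*q0"] quotient_of_div[OF 0] quotient_of_div[OF 1]
      by (simp add: field_simps)
  qed
  show ?thesis
  proof (cases "p = 0 \<and> q = 0")
    case True
    then show ?thesis using that[of 1 0 0] u v by simp
  next
    case False
    define g where "g = gcd p q"
    have "g \<noteq> 0" using False unfolding g_def by simp
    have "p = (p div g) * g" "q = (q div g) * g"
      unfolding g_def by simp_all
    then have "u = of_int (p div g) * (of_int g / of_int d)" "v = of_int (q div g) * (of_int g / of_int d)"
      unfolding u v by (metis of_int_mult times_divide_eq_right)+
    then show ?thesis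
      using that div_gcd_coprime[of p q] False unfolding g_def by blast
  qed
qed

lemma Gamma0_clears_last_coordinate:
  assumes n: "n \<ge> 2" and y: "y \<in> carrier_vec n" "y \<noteq> 0\<^sub>v n"
  shows "\<exists>A D. A \<in> carrier_mat n n \<and> D \<in> carrier_mat n n \<and> sp_diag n A D \<in> Gamma0 n N \<and>
    D *\<^sub>v y \<noteq> 0\<^sub>v n \<and> (D *\<^sub>v y) $ (n-1) = 0"
proof -
  obtain a b :: int and r where ab: "coprime a b" and ya: "y $ 0 = of_int a * r" and yb: "y $ (n-1) = of_int b * r"
    by (rule rat_pair_as_coprime_multiple)
  obtain s t where st: "s * a + t * b = 1"
    using bezout_int[of a b] ab by (auto simp: coprime_iff_gcd_eq_1)
  define A where "A = corner_mat n (of_int a) (of_int b) (of_int (-t)) (of_int s)"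
  define D where "D = corner_mat n (of_int s) (of_int t) (of_int (-b)) (of_int a)"
  have A: "A \<in> carrier_mat n n" and D: "D \<in> carrier_mat n n"
    unfolding A_def D_def by auto
  have "transpose_mat A * D = corner_mat n (of_int (s * a + t * b)) 0 0 (of_int (s * a + t * b))"
    unfolding A_def D_def transpose_corner_mat[OF n] corner_mat_mult[OF n] by (simp add: algebra_simps)
  then have AD: "transpose_mat A * D = 1\<^sub>m n"
    unfolding st using corner_mat_one[OF n] by simp
  have "sp_diag n A D \<in> Gamma0 n N"
    using A D AD by (intro sp_diag_Gamma0) (auto simp: A_def D_def intro!: corner_mat_Ints)
  moreover have "D *\<^sub>v y \<noteq> 0\<^sub>v n"
  proof
    assume "D *\<^sub>v y = 0\<^sub>v n"
    then have "(transpose_mat A * D) *\<^sub>v y = transpose_mat A *\<^sub>v 0\<^sub>v n"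
      using A D y by (simp add: assoc_mult_mat_vec[of _ n n _ n])
    also have "\<dots> = 0\<^sub>v n"
      using A by (intro eq_vecI) auto
    finally show False using AD y by simp
  qed
  moreover have "(D *\<^sub>v y) $ (n-1) = 0"
    unfolding D_def corner_mat_mult_vec_last[OF n y(1)] ya yb by simp
  ultimately show ?thesis
    using A D by blast
qed

lemma Gamma0_makes_lower_half_nonzero:
  assumes N: "N \<ge> 1" and v: "v \<in> carrier_vec (2*n)" "v \<noteq> 0\<^sub>v (2*n)"
  shows "\<exists>\<gamma> \<in> Gamma0 n N. \<exists>x y. x \<in> carrier_vec n \<and> y \<in> carrier_vec n \<and> y \<noteq> 0\<^sub>v n \<and> \<gamma> *\<^sub>v v = x @\<^sub>v y"
proof -
  define x where "x = vec_first v n"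
  define y where "y = vec_last v n"
  have xy: "x \<in> carrier_vec n" "y \<in> carrier_vec n" and v_xy: "v = x @\<^sub>v y"
    unfolding x_def y_def using v by (auto simp: mult_2)
  show ?thesis
  proof (cases "y = 0\<^sub>v n")
    case False
    then show ?thesis
      using Gamma0_one xy v_xy v by (intro bexI[of _ "1\<^sub>m (2*n)"]) auto
  next
    case True
    have "x \<noteq> 0\<^sub>v n"
    proof
      assume "x = 0\<^sub>v n"
      then have "v = 0\<^sub>v n @\<^sub>v 0\<^sub>v n" using v_xy True by simp
      also have "\<dots> = 0\<^sub>v (2*n)" by (rule eq_vecI) auto
      finally show False using v by simp
    qed
    then obtain i where i: "i < n" and xi: "x $ i \<noteq> 0"
      using xy by (metis eq_vecI index_zero_vec carrier_vecD)
    let ?C = "of_nat N \<cdot>\<^sub>m 1\<^sub>m n :: rat mat"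
    have C: "?C \<in> carrier_mat n n" "transpose_mat ?C = ?C"
      by (auto intro!: eq_matI)
    have "sp_lower n ?C \<in> Gamma0 n N"
      using C by (intro sp_lower_Gamma0) (auto simp: int_multiples_def intro: exI[of _ 1] exI[of _ 0])
    moreover have "sp_lower n ?C *\<^sub>v v = x @\<^sub>v (?C *\<^sub>v x + y)"
      unfolding v_xy using sp_lower_mult_vec[OF C(1)] xy by simp
    moreover have "?C *\<^sub>v x + y \<in> carrier_vec n"
      using xy by (simp add: smult_one_mat_mult_vec)
    moreover have "(?C *\<^sub>v x + y) $ i = of_nat N * x $ i"
      using i xy True by (simp add: smult_one_mat_mult_vec)
    then have "?C *\<^sub>v x + y \<noteq> 0\<^sub>v n"
      using N xi i by auto
    ultimately show ?thesis
      using xy by blast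
  qed
qed

lemma Gamma0_moves_into_P_Q_orbit_e_1:
  assumes n: "n \<ge> 2" and N: "N \<ge> 1" and v: "v \<in> carrier_vec (2*n)" "v \<noteq> 0\<^sub>v (2*n)"
  shows "\<exists>\<gamma> \<in> Gamma0 n N. \<exists>p \<in> P_Q n (n-1). \<gamma> *\<^sub>v v = p *\<^sub>v e_1 n"
proof -
  obtain \<gamma>1 x y where \<gamma>1: "\<gamma>1 \<in> Gamma0 n N" and xy: "x \<in> carrier_vec n" "y \<in> carrier_vec n" "y \<noteq> 0\<^sub>v n"
    and \<gamma>1_v: "\<gamma>1 *\<^sub>v v = x @\<^sub>v y"
    using Gamma0_makes_lower_half_nonzero[OF N v] by blast
  obtain A D where AD: "A \<in> carrier_mat n n" "D \<in> carrier_mat n n" and \<gamma>2: "sp_diag n A D \<in> Gamma0 n N"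
    and Dy: "D *\<^sub>v y \<noteq> 0\<^sub>v n" "(D *\<^sub>v y) $ (n-1) = 0"
    using Gamma0_clears_last_coordinate[OF n xy(2,3)] by blast
  obtain p where p: "p \<in> P_Q n (n-1)" and p_e_1: "p *\<^sub>v e_1 n = (A *\<^sub>v x) @\<^sub>v (D *\<^sub>v y)"
    using P_Q_orbit_e_1[OF n mult_mat_vec_carrier[OF AD(1) xy(1)] mult_mat_vec_carrier[OF AD(2) xy(2)] Dy]
    by blast
  have "(sp_diag n A D * \<gamma>1) *\<^sub>v v = sp_diag n A D *\<^sub>v (x @\<^sub>v y)"
    using Gamma0_carrier[OF \<gamma>1] Gamma0_carrier[OF \<gamma>2] v \<gamma>1_v by simp
  also have "\<dots> = p *\<^sub>v e_1 n"
    unfolding p_e_1 using sp_diag_mult_vec AD xy by blast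
  finally show ?thesis
    using Gamma0_mult[OF \<gamma>2 \<gamma>1] p by blast
qed

text \<open>If \<open>\<gamma> g e\<^sub>n = p e\<^sub>1\<close>, then \<open>q = R p\<^sup>-\<^sup>1 \<gamma> g\<close> fixes \<open>e\<^sub>n\<close> (as \<open>R\<^sup>2 = 1\<close> and \<open>R e\<^sub>1 = e\<^sub>n\<close>), so \<open>g = \<gamma>\<^sup>-\<^sup>1 (p R) q\<close>.\<close>

lemma double_coset_meets_P_R:
  assumes n: "n \<ge> 2" and N: "N \<ge> 1" and g: "g \<in> Sp_Q n"
  shows "\<exists>p \<in> P_Q n (n-1). g \<in> double_coset n N (n-1) (p * R_mat n)"
proof -
  have n1: "n \<ge> 1" using n by simp
  have gc: "g \<in> carrier_mat (2*n) (2*n)" using Sp_Q_carrier[OF g] .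
  have "g *\<^sub>v e_n n \<noteq> 0\<^sub>v (2*n)"
    using Sp_Q_mult_vec_nonzero[OF g e_n_carrier] n by (auto simp: e_n_def)
  then obtain \<gamma> p where \<gamma>: "\<gamma> \<in> Gamma0 n N" and p: "p \<in> P_Q n (n-1)"
    and \<gamma>_g: "\<gamma> *\<^sub>v (g *\<^sub>v e_n n) = p *\<^sub>v e_1 n"
    using Gamma0_moves_into_P_Q_orbit_e_1[OF n N mult_mat_vec_carrier[OF gc e_n_carrier]] by blast
  have \<gamma>S: "\<gamma> \<in> Sp_Q n" and pS: "p \<in> Sp_Q n"
    using Gamma0_Sp_Q[OF \<gamma>] P_Q_Sp_Q[OF n1 p] .
  have carriers: "\<gamma> \<in> carrier_mat (2*n) (2*n)" "p \<in> carrier_mat (2*n) (2*n)"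
    "sp_inv n \<gamma> \<in> carrier_mat (2*n) (2*n)" "sp_inv n p \<in> carrier_mat (2*n) (2*n)"
    "R_mat n \<in> carrier_mat (2*n) (2*n)"
    using \<gamma>S pS by (auto intro: Sp_Q_carrier sp_inv_carrier R_mat_carrier)
  define q where "q = R_mat n * sp_inv n p * \<gamma> * g"
  have "q *\<^sub>v e_n n = R_mat n *\<^sub>v ((sp_inv n p * p) *\<^sub>v e_1 n)"
    unfolding q_def using carriers gc \<gamma>_g by (simp add: assoc_mult_mat_vec[of _ "2*n" "2*n" _ "2*n"])
  also have "\<dots> = 1 \<cdot>\<^sub>v e_n n"
    unfolding sp_inv_left[OF pS] using R_mat_mult_e_1[OF n1] by simp
  finally have "q *\<^sub>v e_n n = 1 \<cdot>\<^sub>v e_n n" .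
  moreover have "q \<in> Sp_Q n"
    unfolding q_def by (intro Sp_Q_mult R_mat_Sp_Q sp_inv_Sp_Q pS \<gamma>S g)
  ultimately have q: "q \<in> P_Q n (n-1)"
    unfolding P_Q_iff_fixes_line[OF n1] by blast
  have g_eq: "g = sp_inv n \<gamma> * (p * R_mat n) * q"
  proof -
    have "sp_inv n \<gamma> * (p * R_mat n) * q
        = sp_inv n \<gamma> * (p * ((R_mat n * R_mat n) * (sp_inv n p * (\<gamma> * g))))"
      unfolding q_def using carriers gc by (simp add: assoc_mult_mat[of _ "2*n" "2*n" _ "2*n" _ "2*n"])
    also have "\<dots> = sp_inv n \<gamma> * ((p * sp_inv n p) * (\<gamma> * g))"
      unfolding R_mat_squared using carriers gc by (simp add: assoc_mult_mat[of _ "2*n" "2*n" _ "2*n" _ "2*n"])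
    also have "\<dots> = (sp_inv n \<gamma> * \<gamma>) * g"
      unfolding sp_inv_right[OF pS] using carriers gc by (simp add: assoc_mult_mat[of _ "2*n" "2*n" _ "2*n" _ "2*n"])
    finally show ?thesis
      unfolding sp_inv_left[OF \<gamma>S] using gc by simp
  qed
  have "g \<in> double_coset n N (n-1) (p * R_mat n)"
    unfolding double_coset_def using g_eq Gamma0_sp_inv[OF \<gamma>] q by (intro CollectI exI conjI)
  then show ?thesis
    using p by blast
qed

theorem lemma4p3:
  fixes n N :: nat
  assumes "n \<ge> 2" and "N \<ge> 1"
  shows "\<exists>S. S \<subseteq> {p * R_mat n | p. p \<in> P_Q n (n - 1)} \<and>
             (\<forall>g \<in> Sp_Q n. \<exists>!s. s \<in> S \<and> g \<in> double_coset n N (n - 1) s)"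
proof (rule exists_class_representatives)
  have n: "n \<ge> 1" using assms(1) by simp
  have PR_carrier: "t \<in> carrier_mat (2*n) (2*n)" if "t \<in> {p * R_mat n | p. p \<in> P_Q n (n - 1)}" for t
    using that P_Q_carrier[OF n] R_mat_carrier by auto
  show "g \<in> double_coset n N (n - 1) g" if "g \<in> Sp_Q n" for g
    using double_coset_self[OF n Sp_Q_carrier[OF that]] .
  show "\<exists>t \<in> {p * R_mat n | p. p \<in> P_Q n (n - 1)}. g \<in> double_coset n N (n - 1) t" if "g \<in> Sp_Q n" for g
    using double_coset_meets_P_R[OF assms that] by blast
  show "double_coset n N (n - 1) g = double_coset n N (n - 1) t"
    if "g \<in> Sp_Q n" "t \<in> {p * R_mat n | p. p \<in> P_Q n (n - 1)}" "g \<in> double_coset n N (n - 1) t" for g t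
    using double_coset_eq[OF n PR_carrier[OF that(2)] that(3)] .
qed

end
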